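(* For every nonzero $\xi\in\mathbb{R}^4$ the sequence $0\leftarrow\mathbb{C}^3\xleftarrow{D_0(\xi)^t}\mathbb{C}^4\xleftarrow{D_1(\xi)^t}\mathbb{C}^1\leftarrow0$ is exact, i.e. $D_0(\xi)^t$ is surjective, $D_1(\xi)^t$ is injective and $\operatorname{Im}D_1(\xi)^t=\ker D_0(\xi)^t$.
   Context: With $\eta_0=\xi_0-i\xi_1$, $\eta_1=\xi_2-i\xi_3$ (so $\bar\eta_0=\xi_0+i\xi_1$, $\bar\eta_1=\xi_2+i\xi_3$ for real $\xi$), the symbol matrices (obtained from the 2-Cauchy–Fueter operators by replacing $\partial_{x_j}$ by $\frac1i\xi_j$), with $t$ denoting transpose, are $D_0(\xi)^t=\frac1i\begin{pmatrix}-\bar\eta_1&\eta_0&0&0\\-\bar\eta_0&-\eta_1&-\bar\eta_1&\eta_0\\0&0&-\bar\eta_0&-\eta_1\end{pmatrix}$ and $D_1(\xi)^t=\frac1i\begin{pmatrix}-\eta_0\\-\bar\eta_1\\\eta_1\\-\bar\eta_0\end{pmatrix}$. *)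

theory Defs
  imports "HOL-Analysis.Analysis" "HOL-Library.Numeral_Type"
begin

text \<open>xi = (xi_0, xi_1, xi_2, xi_3) in R^4, stored as xi = vector [xi_0, xi_1, xi_2, xi_3], i.e. xi_k = xi $ (k+1) (library convention of vector: 1-based).\<close>

definition eta0 :: "real^4 \<Rightarrow> complex" where
  "eta0 \<xi> = Complex (\<xi> $ 1) (- (\<xi> $ 2))"

definition eta1 :: "real^4 \<Rightarrow> complex" where
  "eta1 \<xi> = Complex (\<xi> $ 3) (- (\<xi> $ 4))"

definition D0t :: "real^4 \<Rightarrow> complex^4^3" where
  "D0t \<xi> = (\<chi> i j. (1 / \<i>) *
     (vector [vector [- cnj (eta1 \<xi>), eta0 \<xi>, 0, 0],
              vector [- cnj (eta0 \<xi>), - eta1 \<xi>, - cnj (eta1 \<xi>), eta0 \<xi>],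
              vector [0, 0, - cnj (eta0 \<xi>), - eta1 \<xi>]] :: complex^4^3) $ i $ j)"

definition D1t :: "real^4 \<Rightarrow> complex^1^4" where
  "D1t \<xi> = (\<chi> i j. (1 / \<i>) *
     (vector [vector [- eta0 \<xi>], vector [- cnj (eta1 \<xi>)],
              vector [eta1 \<xi>], vector [- cnj (eta0 \<xi>)]] :: complex^1^4) $ i $ j)"

end

theory Submission imports Defs begin

text \<open>With \<open>a = \<eta>\<^sub>0\<close>, \<open>b = \<eta>\<^sub>1\<close> and \<open>N = |a|\<^sup>2 + |b|\<^sup>2 = |\<xi>|\<^sup>2\<close>, one has
  \<open>D\<^sub>0(\<xi>)\<^sup>t D\<^sub>0(\<xi>)\<^sup>t* = diag(N, 2N, N)\<close>, which is invertible for \<open>\<xi> \<noteq> 0\<close>; this gives an explicit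
  right inverse of \<open>D\<^sub>0(\<xi>)\<^sup>t\<close>. The single column of \<open>D\<^sub>1(\<xi>)\<^sup>t\<close> has squared length \<open>2N\<close>, so
  \<open>D\<^sub>1(\<xi>)\<^sup>t\<close> is injective, and \<open>D\<^sub>0(\<xi>)\<^sup>t D\<^sub>1(\<xi>)\<^sup>t = 0\<close> by direct computation. Finally the
  kernel equations of \<open>D\<^sub>0(\<xi>)\<^sup>t\<close> force every kernel vector to coincide with its orthogonal
  projection onto that column.\<close>

lemma vector_4_nth [simp]:
  "(vector [x, y, z, w] :: 'a::zero^4) $ 1 = x"
  "(vector [x, y, z, w] :: 'a::zero^4) $ 2 = y"
  "(vector [x, y, z, w] :: 'a::zero^4) $ 3 = z"
  "(vector [x, y, z, w] :: 'a::zero^4) $ 4 = w"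
  unfolding vector_def by simp_all

lemma D0t_mult_vector_nth:
  "(D0t \<xi> *v v) $ 1 = (1/\<i>) * (- cnj (eta1 \<xi>) * v$1 + eta0 \<xi> * v$2)"
  "(D0t \<xi> *v v) $ 2 =
     (1/\<i>) * (- cnj (eta0 \<xi>) * v$1 - eta1 \<xi> * v$2 - cnj (eta1 \<xi>) * v$3 + eta0 \<xi> * v$4)"
  "(D0t \<xi> *v v) $ 3 = (1/\<i>) * (- cnj (eta0 \<xi>) * v$3 - eta1 \<xi> * v$4)"
  by (simp_all add: D0t_def matrix_vector_mult_def sum_4 algebra_simps)

lemma D1t_mult_vector_nth:
  "(D1t \<xi> *v w) $ 1 = (1/\<i>) * (- eta0 \<xi>) * w$1"
  "(D1t \<xi> *v w) $ 2 = (1/\<i>) * (- cnj (eta1 \<xi>)) * w$1"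
  "(D1t \<xi> *v w) $ 3 = (1/\<i>) * eta1 \<xi> * w$1"
  "(D1t \<xi> *v w) $ 4 = (1/\<i>) * (- cnj (eta0 \<xi>)) * w$1"
  by (simp_all add: D1t_def matrix_vector_mult_def sum_1)

lemma eta_norm_square_sum:
  "eta0 \<xi> * cnj (eta0 \<xi>) + eta1 \<xi> * cnj (eta1 \<xi>) = of_real ((norm \<xi>)\<^sup>2)"
proof -
  have "(norm \<xi>)\<^sup>2 = (\<xi>$1)\<^sup>2 + (\<xi>$2)\<^sup>2 + (\<xi>$3)\<^sup>2 + (\<xi>$4)\<^sup>2"
    unfolding power2_norm_eq_inner by (simp add: inner_vec_def sum_4 power2_eq_square)
  then show ?thesis
    by (simp add: eta0_def eta1_def complex_eq_iff power2_eq_square)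
qed

lemma eta_norm_square_sum_nonzero:
  assumes "\<xi> \<noteq> 0"
  shows "eta0 \<xi> * cnj (eta0 \<xi>) + eta1 \<xi> * cnj (eta1 \<xi>) \<noteq> 0"
  using assms by (simp add: eta_norm_square_sum)

lemma D0t_D1t_mult_vector: "D0t \<xi> *v (D1t \<xi> *v w) = 0"
  by (simp add: vec_eq_iff forall_3 D0t_mult_vector_nth D1t_mult_vector_nth algebra_simps)

lemma surj_D0t:
  assumes "\<xi> \<noteq> 0"
  shows "surj (\<lambda>v. D0t \<xi> *v v)"
proof (rule surjI)
  fix y :: "complex^3"
  define a b where "a = eta0 \<xi>" and "b = eta1 \<xi>"
  define N where "N = a * cnj a + b * cnj b"
  have "N \<noteq> 0"
    using eta_norm_square_sum_nonzero[OF assms] by (simp add: N_def a_def b_def)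
  define z1 z2 z3 where "z1 = y$1 / N" and "z2 = y$2 / (2*N)" and "z3 = y$3 / N"
  \<comment> \<open>\<open>(z1, z2, z3) = (D\<^sub>0 D\<^sub>0*)\<^sup>-\<^sup>1 y\<close>; the preimage below is \<open>D\<^sub>0* z\<close>\<close>
  have "N * z1 = y$1" "2 * N * z2 = y$2" "N * z3 = y$3"
    using \<open>N \<noteq> 0\<close> by (simp_all add: z1_def z2_def z3_def)
  then show "D0t \<xi> *v vector [\<i> * (- b*z1 - a*z2), \<i> * (cnj a*z1 - cnj b*z2),
                               \<i> * (- b*z2 - a*z3), \<i> * (cnj a*z2 - cnj b*z3)] = y"
    unfolding vec_eq_iff forall_3 D0t_mult_vector_nth vector_4_nth a_def [symmetric]
      b_def [symmetric] N_def
    by (auto simp: algebra_simps)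
qed

lemma inj_D1t:
  assumes "\<xi> \<noteq> 0"
  shows "inj (\<lambda>w. D1t \<xi> *v w)"
proof (rule injI)
  fix w1 w2 :: "complex^1"
  assume eq: "D1t \<xi> *v w1 = D1t \<xi> *v w2"
  have "eta0 \<xi> \<noteq> 0 \<or> eta1 \<xi> \<noteq> 0"
    using eta_norm_square_sum_nonzero[OF assms] by auto
  moreover have "eta0 \<xi> * w1$1 = eta0 \<xi> * w2$1" "eta1 \<xi> * w1$1 = eta1 \<xi> * w2$1"
    using arg_cong[OF eq, of "\<lambda>v. v$1"] arg_cong[OF eq, of "\<lambda>v. v$3"]
    by (simp_all add: D1t_mult_vector_nth)
  ultimately show "w1 = w2"
    by (auto simp: vec_eq_iff)
qed

lemma kernel_D0t_subset_range_D1t: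
  assumes "\<xi> \<noteq> 0"
  shows "{v. D0t \<xi> *v v = 0} \<subseteq> range (\<lambda>w. D1t \<xi> *v w)"
proof
  fix v :: "complex^4"
  assume "v \<in> {v. D0t \<xi> *v v = 0}"
  define a b where "a = eta0 \<xi>" and "b = eta1 \<xi>"
  define N where "N = a * cnj a + b * cnj b"
  have "N \<noteq> 0"
    using eta_norm_square_sum_nonzero[OF assms] by (simp add: N_def a_def b_def)
  from \<open>v \<in> _\<close> have h1: "- cnj b * v$1 + a * v$2 = 0"
    and h2: "- cnj a * v$1 - b * v$2 - cnj b * v$3 + a * v$4 = 0"
    and h3: "- cnj a * v$3 - b * v$4 = 0"
    by (auto simp: vec_eq_iff forall_3 D0t_mult_vector_nth a_def b_def)
  \<comment> \<open>\<open>\<i> s\<close> is the inner product of \<open>v\<close> with the column of \<open>D\<^sub>1(\<xi>)\<^sup>t\<close>, whose squared length is \<open>2N\<close>\<close>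
  define s where "s = - cnj a * v$1 - b * v$2 + cnj b * v$3 - a * v$4"
  have "- a * s = 2*N * v$1" "- cnj b * s = 2*N * v$2"
       "b * s = 2*N * v$3" "- cnj a * s = 2*N * v$4"
    unfolding s_def N_def using h1 h2 h3 by algebra+
  then have "v = D1t \<xi> *v vec (\<i> * s / (2*N))"
    using \<open>N \<noteq> 0\<close>
    by (simp add: vec_eq_iff forall_4 D1t_mult_vector_nth a_def [symmetric]
        b_def [symmetric] field_simps)
  then show "v \<in> range (\<lambda>w. D1t \<xi> *v w)" by blast
qed

theorem lemma3p1:
  fixes \<xi> :: "real^4"
  assumes "\<xi> \<noteq> 0"
  shows "surj (\<lambda>v. D0t \<xi> *v v) \<and> inj (\<lambda>w. D1t \<xi> *v w) \<and>
         range (\<lambda>w. D1t \<xi> *v w) = {v. D0t \<xi> *v v = 0}"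
proof -
  have "range (\<lambda>w. D1t \<xi> *v w) \<subseteq> {v. D0t \<xi> *v v = 0}"
    using D0t_D1t_mult_vector by blast
  then show ?thesis
    using surj_D0t inj_D1t kernel_D0t_subset_range_D1t assms by blast
qed

end
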